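(* Let $\mathcal{M}=\mathbb{R}^{d_{\mathbb E}}\times\mathbb{S}^{d_{\mathbb S}}\times\mathbb{H}^{d_{\mathbb H}}$ and let $(x_n,y_n)_{n=1}^N$, $x_n=(x_{\mathbb E,n},x_{\mathbb S,n},x_{\mathbb H,n})$, be points in a compact subset of $\mathcal{M}$ with labels $y_n\in\{-1,1\}$, such that $\|x_{\mathbb H,n}\|_2\le R$ for all $n$. Suppose the point set is $\varepsilon$-margin linearly separable for some $\varepsilon>0$, i.e. there are $w_{\mathbb E}\in\mathbb{R}^{d_{\mathbb E}}$ with $\|w_{\mathbb E}\|_2=\alpha_{\mathbb E}$, $b\in\mathbb{R}$, $w_{\mathbb S}\in\mathbb{R}^{d_{\mathbb S}+1}$ with $\|w_{\mathbb S}\|_2=\sqrt{C_{\mathbb S}}$, and $w_{\mathbb H}\in\mathbb{R}^{d_{\mathbb H}+1}$ with $\sqrt{[w_{\mathbb H},w_{\mathbb H}]}=\sqrt{-C_{\mathbb H}}$, such that for all $n$, $$y_n\big(w_{\mathbb E}^\top x_{\mathbb E,n}+b+\alpha_{\mathbb S}\,\mathrm{asin}(w_{\mathbb S}^\top x_{\mathbb S,n})+\alpha_{\mathbb H}\,\mathrm{asinh}([w_{\mathbb H},x_{\mathbb H,n}])\big)\ge\varepsilon,$$ and suppose moreover $\|w_{\mathbb H}\|_2\le 1/R$. Then the product space form perceptron (described below) converges in $O(1/\varepsilon^2)$ steps (number of updates).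
   Context: $\mathbb{S}^{d}=\{x\in\mathbb{R}^{d+1}:\langle x,x\rangle=C_{\mathbb S}^{-1}\}$ with $C_{\mathbb S}>0$; $\mathbb{H}^{d}=\{x\in\mathbb{R}^{d+1}:[x,x]=C_{\mathbb H}^{-1},x_1>0\}$ with $C_{\mathbb H}<0$, where $[u,v]=u^\top Hv$, $H=\mathrm{diag}(-1,1,\dots,1)$. $\alpha_{\mathbb E},\alpha_{\mathbb S},\alpha_{\mathbb H}>0$ are fixed weights. The perceptron: define the kernel $K(x,x_n)=1+x_{\mathbb E}^\top x_{\mathbb E,n}+\alpha_{\mathbb S}\,\mathrm{asin}(C_{\mathbb S}x_{\mathbb S}^\top x_{\mathbb S,n})+\alpha_{\mathbb H}\,\mathrm{asin}(R^{-2}x_{\mathbb H}^\top x_{\mathbb H,n})$. Start with $g_0\equiv0$, $k=0$, $n=1$; repeatedly: if $\mathrm{sgn}(g_k(x_n))\ne y_n$ (with $\mathrm{sgn}(0)=0$), set $g_{k+1}(x)=g_k(x)+y_nK(x,x_n)$ and $k\leftarrow k+1$; then $n\leftarrow (n \bmod N)+1$. A point $x$ is classified as $\mathrm{sgn}(g_k(x))$; convergence means that after the stated number of updates no further update occurs, i.e. all training points are correctly classified. *)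

theory Defs
  imports Complex_Main
begin

text \<open>Vectors in R^m are functions nat => real, only indices < m matter.
  Spherical / hyperbolic components live in R^(d+1), indices 0..d,
  and index 0 is the time-like coordinate for the Lorentz product.\<close>

definition dotp :: "nat \<Rightarrow> (nat \<Rightarrow> real) \<Rightarrow> (nat \<Rightarrow> real) \<Rightarrow> real" where
  "dotp m u v = (\<Sum>i<m. u i * v i)"

definition enorm :: "nat \<Rightarrow> (nat \<Rightarrow> real) \<Rightarrow> real" where
  "enorm m u = sqrt (dotp m u u)"

definition lorentz :: "nat \<Rightarrow> (nat \<Rightarrow> real) \<Rightarrow> (nat \<Rightarrow> real) \<Rightarrow> real" where
  "lorentz d u v = - u 0 * v 0 + (\<Sum>i\<in>{1..d}. u i * v i)"

definition on_sphere :: "nat \<Rightarrow> real \<Rightarrow> (nat \<Rightarrow> real) \<Rightarrow> bool" where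
  "on_sphere d CS x \<longleftrightarrow> dotp (d+1) x x = 1 / CS"

definition on_hyperboloid :: "nat \<Rightarrow> real \<Rightarrow> (nat \<Rightarrow> real) \<Rightarrow> bool" where
  "on_hyperboloid d CH x \<longleftrightarrow> lorentz d x x = 1 / CH \<and> x 0 > 0"

type_synonym point = "(nat \<Rightarrow> real) \<times> (nat \<Rightarrow> real) \<times> (nat \<Rightarrow> real)"

definition psf_kernel ::
  "nat \<Rightarrow> nat \<Rightarrow> nat \<Rightarrow> real \<Rightarrow> real \<Rightarrow> real \<Rightarrow> real \<Rightarrow> point \<Rightarrow> point \<Rightarrow> real" where
  "psf_kernel dE dS dH \<alpha>S \<alpha>H CS R x x' =
     (case x of (xE, xS, xH) \<Rightarrow> case x' of (xE', xS', xH') \<Rightarrow>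
       1 + dotp dE xE xE' + \<alpha>S * arcsin (CS * dotp (dS+1) xS xS')
         + \<alpha>H * arcsin (dotp (dH+1) xH xH' / R\<^sup>2))"

text \<open>Perceptron state: (list of indices of the points used in the updates so far,
  current index n). Training points are indexed 0..N-1 (0-based), cycled.
  g(x) = sum over updates j of y_j K(x, x_j).\<close>
definition perc_g ::
  "(point \<Rightarrow> point \<Rightarrow> real) \<Rightarrow> (nat \<Rightarrow> point) \<Rightarrow> (nat \<Rightarrow> real) \<Rightarrow> nat list \<Rightarrow> point \<Rightarrow> real" where
  "perc_g K X y upd x = sum_list (map (\<lambda>j. y j * K x (X j)) upd)"

definition perc_step ::
  "(point \<Rightarrow> point \<Rightarrow> real) \<Rightarrow> nat \<Rightarrow> (nat \<Rightarrow> point) \<Rightarrow> (nat \<Rightarrow> real)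
     \<Rightarrow> nat list \<times> nat \<Rightarrow> nat list \<times> nat" where
  "perc_step K N X y s = (case s of (upd, n) \<Rightarrow>
     (if sgn (perc_g K X y upd (X n)) \<noteq> y n then upd @ [n] else upd, Suc n mod N))"

definition perc_run ::
  "(point \<Rightarrow> point \<Rightarrow> real) \<Rightarrow> nat \<Rightarrow> (nat \<Rightarrow> point) \<Rightarrow> (nat \<Rightarrow> real) \<Rightarrow> nat \<Rightarrow> nat list \<times> nat" where
  "perc_run K N X y t = (perc_step K N X y ^^ t) ([], 0)"

definition perc_converges_within ::
  "(point \<Rightarrow> point \<Rightarrow> real) \<Rightarrow> nat \<Rightarrow> (nat \<Rightarrow> point) \<Rightarrow> (nat \<Rightarrow> real) \<Rightarrow> real \<Rightarrow> bool" where
  "perc_converges_within K N X y T \<longleftrightarrow>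
     (\<exists>t. real (length (fst (perc_run K N X y t))) \<le> T \<and>
          (\<forall>t'\<ge>t. fst (perc_run K N X y t') = fst (perc_run K N X y t)))"

end

theory Submission
  imports Defs "HOL-Analysis.Generalised_Binomial_Theorem"
begin

text \<open>The kernel K is positive semidefinite on the data, and the separating function
  f(x) = w_E x_E + b + alpha_S asin(w_S x_S) + alpha_H asinh[w_H, x_H] lies in its reproducing
  kernel Hilbert space with squared norm at most W = alpha_E^2 + b^2 + (alpha_S + alpha_H) pi/2.
  Indeed, after expanding asin and asinh into power series, whose coefficients are bounded in
  absolute value by the nonnegative coefficients of asin, each term of f pairs with the
  corresponding term of K as a scaled tensor power of a dot product, for which the claim is the
  Cauchy-Schwarz inequality. The series converge only strictly inside [-1, 1], so the argument is
  run with asin(r t), asinh(r t) for r < 1 and then r tends to 1.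
  The classical perceptron argument finishes the proof: after k updates the current function g_k
  satisfies <f, g_k> >= k eps and ||g_k||^2 <= k B, where B bounds K(x_n, x_n), so
  k^2 eps^2 <= W k B.\<close>

lemma dotp_self_nonneg: "0 \<le> dotp d u u"
  by (simp add: dotp_def sum_nonneg)

lemma dotp_self_eq_enorm_square: "dotp d u u = (enorm d u)\<^sup>2"
  by (simp add: enorm_def dotp_self_nonneg)

lemma dotp_self_le_if_enorm_le:
  assumes "enorm d u \<le> c"
  shows "dotp d u u \<le> c\<^sup>2"
proof -
  have "0 \<le> enorm d u"
    by (simp add: enorm_def dotp_self_nonneg)
  with power_mono[OF assms] show ?thesis
    by (simp add: dotp_self_eq_enorm_square)
qed

lemma dotp_commute: "dotp d u v = dotp d v u"
  by (simp add: dotp_def mult.commute)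

lemma lorentz_eq_dotp: "lorentz d w v = dotp (Suc d) (w(0 := - w 0)) v"
  unfolding lorentz_def dotp_def sum.lessThan_Suc_shift One_nat_def sum.atLeast1_atMost_eq
  by simp

lemma dotp_time_reflect: "dotp (Suc d) (w(0 := - w 0)) (w(0 := - w 0)) = dotp (Suc d) w w"
  unfolding dotp_def sum.lessThan_Suc_shift by simp

lemma abs_dotp_le_sqrt:
  assumes "dotp d u u \<le> a" "dotp d v v \<le> b"
  shows "\<bar>dotp d u v\<bar> \<le> sqrt (a * b)"
proof -
  have "(dotp d u v)\<^sup>2 \<le> dotp d u u * dotp d v v"
    using Cauchy_Schwarz_ineq_sum[of u v "{..<d}"] by (simp add: dotp_def power2_eq_square)
  also have "\<dots> \<le> a * b"
    using assms dotp_self_nonneg by (intro mult_mono) (auto intro: order_trans)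
  finally show ?thesis
    using real_sqrt_le_mono by fastforce
qed

lemma abs_dotp_le_ball:
  assumes "0 < \<kappa>" "dotp d u u \<le> 1 / \<kappa>" "dotp d v v \<le> 1 / \<kappa>"
  shows "\<bar>\<kappa> * dotp d u v\<bar> \<le> 1"
proof -
  have "\<bar>dotp d u v\<bar> \<le> sqrt (1 / \<kappa> * (1 / \<kappa>))"
    using assms(2,3) by (rule abs_dotp_le_sqrt)
  also have "\<dots> = 1 / \<kappa>"
    using assms(1) by (subst real_sqrt_abs2) simp
  finally show ?thesis
    using assms(1) by (simp add: abs_mult field_simps)
qed

section \<open>Power series of arcsin and arsinh\<close>

text \<open>Taylor coefficients at 0 of the primitive of (1 + c t^2)^(-1/2) vanishing at 0:
  c = -1 gives arcsin, c = 1 gives arsinh.\<close>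
definition arc_coeff :: "real \<Rightarrow> nat \<Rightarrow> real" where
  "arc_coeff c n =
     (if even n then c ^ (n div 2) * ((-1/2) gchoose (n div 2)) / real (Suc n) else 0)"

lemma arc_coeff_minus_one_nonneg: "0 \<le> arc_coeff (-1) n"
proof -
  have "(-1) ^ k * ((-1/2::real) gchoose k) = pochhammer (1/2) k / fact k" for k
    by (simp add: gbinomial_pochhammer power_mult_distrib[symmetric])
  moreover have "0 < pochhammer (1/2::real) k" for k
    by (rule pochhammer_pos) simp
  ultimately show ?thesis
    by (simp add: arc_coeff_def zero_le_divide_iff less_imp_le)
qed

lemma abs_arc_coeff_one: "\<bar>arc_coeff 1 n\<bar> = arc_coeff (-1) n"
proof -
  have "\<bar>arc_coeff 1 n\<bar> = \<bar>arc_coeff (-1) n\<bar>"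
    by (simp add: arc_coeff_def abs_mult)
  with arc_coeff_minus_one_nonneg show ?thesis
    by simp
qed

lemma sums_arc_coeff_deriv:
  assumes "\<bar>c * x\<^sup>2\<bar> < 1"
  shows "(\<lambda>n. arc_coeff c n * real (Suc n) * x ^ n) sums (1 + c * x\<^sup>2) powr (-1/2)"
proof -
  have "(\<lambda>k. ((-1/2) gchoose k) * (c * x\<^sup>2) ^ k) sums (1 + c * x\<^sup>2) powr (-1/2)"
    by (rule gen_binomial_real[OF assms])
  from sums_if[OF sums_zero this]
  have "(\<lambda>n. if even n then ((-1/2) gchoose (n div 2)) * (c * x\<^sup>2) ^ (n div 2) else 0)
      sums (1 + c * x\<^sup>2) powr (-1/2)"
    by simp
  moreover have "arc_coeff c n * real (Suc n) * x ^ n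
      = (if even n then ((-1/2) gchoose (n div 2)) * (c * x\<^sup>2) ^ (n div 2) else 0)" for n
    by (cases "even n") (auto simp: arc_coeff_def power_mult_distrib power_mult elim!: evenE)
  ultimately show ?thesis
    by simp
qed

lemma sums_arc_coeff_primitive:
  fixes T :: "real \<Rightarrow> real"
  assumes c: "\<bar>c\<bar> \<le> 1" and x: "\<bar>x\<bar> < 1" and T0: "T 0 = 0"
    and T': "\<And>x. \<bar>x\<bar> < 1 \<Longrightarrow> (T has_real_derivative (1 + c * x\<^sup>2) powr (-1/2)) (at x)"
  shows "(\<lambda>n. arc_coeff c n * x ^ Suc n) sums T x"
proof -
  have deriv_sums: "(\<lambda>n. arc_coeff c n * real (Suc n) * z ^ n) sums (1 + c * z\<^sup>2) powr (-1/2)"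
    if "\<bar>z\<bar> < 1" for z
  proof (rule sums_arc_coeff_deriv)
    have "\<bar>c * z\<^sup>2\<bar> \<le> z\<^sup>2"
      using c by (simp add: abs_mult mult_left_le_one_le)
    also have "z\<^sup>2 < 1"
      using that by (simp add: abs_square_less_1)
    finally show "\<bar>c * z\<^sup>2\<bar> < 1" .
  qed
  define S where "S z = (\<Sum>n. arc_coeff c n * z ^ Suc n)" for z
  have S': "(S has_real_derivative (1 + c * z\<^sup>2) powr (-1/2)) (at z)" if "\<bar>z\<bar> < 1" for z
  proof -
    have "(S has_real_derivative (\<Sum>n. arc_coeff c n * real (Suc n) * z ^ n)) (at z)"
      unfolding S_def
      by (rule DERIV_power_series'[where R = 1])
         (use that deriv_sums sums_summable in \<open>auto simp: abs_less_iff\<close>)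
    then show ?thesis
      using sums_unique[OF deriv_sums[OF that]] by simp
  qed
  have "S x - T x = S 0 - T 0"
    by (rule DERIV_isconst3[where a = "-1" and b = 1])
       (use x S' T' in \<open>auto simp: abs_less_iff intro!: derivative_eq_intros\<close>)
  then have "S x = T x"
    using T0 by (simp add: S_def)
  obtain z where z: "\<bar>x\<bar> < z" "z < 1"
    using x dense by blast
  have "summable (\<lambda>n. norm (arc_coeff c n * real (Suc n) * x ^ n))"
    using powser_insidea[of "\<lambda>n. arc_coeff c n * real (Suc n)" z x] deriv_sums[of z] z
    by (simp add: sums_summable)
  then have "summable (\<lambda>n. arc_coeff c n * x ^ Suc n)"
  proof (rule summable_comparison_test'[where N = 0])
    fix n
    have "norm (arc_coeff c n * x ^ Suc n) = (\<bar>arc_coeff c n\<bar> * \<bar>x\<bar> ^ n) * \<bar>x\<bar>"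
      by (simp add: abs_mult power_abs)
    also have "\<dots> \<le> (\<bar>arc_coeff c n\<bar> * \<bar>x\<bar> ^ n) * real (Suc n)"
      using x by (intro mult_left_mono) auto
    also have "\<dots> = norm (arc_coeff c n * real (Suc n) * x ^ n)"
      by (simp add: abs_mult power_abs)
    finally show "norm (arc_coeff c n * x ^ Suc n) \<le> norm (arc_coeff c n * real (Suc n) * x ^ n)" .
  qed
  then show ?thesis
    using \<open>S x = T x\<close> unfolding S_def by (metis summable_sums)
qed

lemma arcsin_sums:
  assumes "\<bar>x\<bar> < 1"
  shows "(\<lambda>n. arc_coeff (-1) n * x ^ Suc n) sums arcsin x"
proof (rule sums_arc_coeff_primitive)
  fix z :: real
  assume z: "\<bar>z\<bar> < 1"
  then have "0 < 1 - z\<^sup>2"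
    by (simp add: abs_square_less_1)
  then have "(1 + (-1) * z\<^sup>2) powr (-1/2) = inverse (sqrt (1 - z\<^sup>2))"
    by (simp add: powr_minus powr_half_sqrt [symmetric] powr_minus_divide)
  then show "(arcsin has_real_derivative (1 + (-1) * z\<^sup>2) powr (-1/2)) (at z)"
    using DERIV_arcsin[of z] z by (simp add: abs_less_iff)
qed (use assms in auto)

lemma arc_coeff_partial_sum_le:
  assumes "0 \<le> r" "r < 1"
  shows "(\<Sum>n<N. arc_coeff (-1) n * r ^ Suc n) \<le> pi / 2"
proof -
  have r_sums: "(\<lambda>n. arc_coeff (-1) n * r ^ Suc n) sums arcsin r"
    using assms by (intro arcsin_sums) simp
  have "(\<Sum>n<N. arc_coeff (-1) n * r ^ Suc n) \<le> arcsin r"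
    unfolding sums_unique[OF r_sums]
    by (rule sum_le_suminf[OF sums_summable[OF r_sums]]) (use assms arc_coeff_minus_one_nonneg in auto)
  also have "\<dots> \<le> pi / 2"
    using arcsin_bounded[of r] assms by simp
  finally show ?thesis .
qed

lemma arsinh_sums:
  assumes "\<bar>x\<bar> < 1"
  shows "(\<lambda>n. arc_coeff 1 n * x ^ Suc n) sums arsinh x"
proof (rule sums_arc_coeff_primitive)
  fix z :: real
  have "(1 + 1 * z\<^sup>2) powr (-1/2) = 1 / sqrt (z\<^sup>2 + 1)"
    by (simp add: powr_minus powr_half_sqrt [symmetric] powr_minus_divide add.commute inverse_eq_divide)
  then show "(arsinh has_real_derivative (1 + 1 * z\<^sup>2) powr (-1/2)) (at z)"
    using arsinh_real_has_field_derivative[of z] by simp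
qed (use assms in auto)

section \<open>Functions in the RKHS of a kernel\<close>

definition gram_form :: "('a \<Rightarrow> 'a \<Rightarrow> real) \<Rightarrow> 'i set \<Rightarrow> ('i \<Rightarrow> real) \<Rightarrow> ('i \<Rightarrow> 'a) \<Rightarrow> real" where
  "gram_form K I a p = (\<Sum>i\<in>I. \<Sum>j\<in>I. a i * a j * K (p i) (p j))"

text \<open>\<open>in_rkhs S K f W\<close> says that \<open>K\<close> is positive semidefinite on \<open>S\<close> and that \<open>f\<close> lies in the
  reproducing kernel Hilbert space of \<open>K\<close> on \<open>S\<close> with squared norm at most \<open>W\<close>, expressed through
  finite families so that the Hilbert space itself is never constructed.\<close>
definition in_rkhs :: "'a set \<Rightarrow> ('a \<Rightarrow> 'a \<Rightarrow> real) \<Rightarrow> ('a \<Rightarrow> real) \<Rightarrow> real \<Rightarrow> bool" where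
  "in_rkhs S K f W \<longleftrightarrow> 0 \<le> W \<and>
     (\<forall>(I :: nat set) a p. finite I \<longrightarrow> p ` I \<subseteq> S \<longrightarrow>
        0 \<le> gram_form K I a p \<and> (\<Sum>i\<in>I. a i * f (p i))\<^sup>2 \<le> W * gram_form K I a p)"

lemma in_rkhsI:
  assumes "0 \<le> W"
    and "\<And>(I :: nat set) a p. finite I \<Longrightarrow> p ` I \<subseteq> S \<Longrightarrow> 0 \<le> gram_form K I a p"
    and "\<And>(I :: nat set) a p. finite I \<Longrightarrow> p ` I \<subseteq> S \<Longrightarrow>
      (\<Sum>i\<in>I. a i * f (p i))\<^sup>2 \<le> W * gram_form K I a p"
  shows "in_rkhs S K f W"
  using assms by (simp add: in_rkhs_def)

lemma in_rkhs_weight_nonneg: "in_rkhs S K f W \<Longrightarrow> 0 \<le> W"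
  by (simp add: in_rkhs_def)

lemma in_rkhsD:
  fixes I :: "nat set"
  assumes "in_rkhs S K f W" "finite I" "p ` I \<subseteq> S"
  shows "0 \<le> gram_form K I a p" "(\<Sum>i\<in>I. a i * f (p i))\<^sup>2 \<le> W * gram_form K I a p"
  using assms by (auto simp: in_rkhs_def)

lemma in_rkhs_diag_nonneg:
  assumes "in_rkhs S K f W" "x \<in> S"
  shows "0 \<le> K x x"
  using in_rkhsD(1)[OF assms(1), of "{0}" "\<lambda>_. x" "\<lambda>_. 1"] assms(2)
  by (simp add: gram_form_def)

lemma in_rkhs_const: "in_rkhs S (\<lambda>_ _. 1) (\<lambda>_. b) (b\<^sup>2)"
proof (rule in_rkhsI)
  fix I :: "nat set" and a :: "nat \<Rightarrow> real" and p :: "nat \<Rightarrow> 'a"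
  have gram: "gram_form (\<lambda>_ _. 1) I a p = (\<Sum>i\<in>I. a i)\<^sup>2"
    by (simp add: gram_form_def power2_eq_square sum_product)
  then show "0 \<le> gram_form (\<lambda>_ _. 1) I a p"
    by simp
  show "(\<Sum>i\<in>I. a i * b)\<^sup>2 \<le> b\<^sup>2 * gram_form (\<lambda>_ _. 1) I a p"
    by (simp add: gram sum_distrib_right[symmetric] power_mult_distrib)
qed simp

lemma in_rkhs_dotp_power:
  "in_rkhs UNIV (\<lambda>u v. dotp d u v ^ m) (\<lambda>u. dotp d w u ^ m) (dotp d w w ^ m)"
proof (rule in_rkhsI)
  define F where "F = PiE {..<m} (\<lambda>_. {..<d})"
  define P where "P u f = (\<Prod>l<m. u (f l))" for u :: "nat \<Rightarrow> real" and f
  \<comment> \<open>\<open>P u\<close> is the feature vector of \<open>u\<close> in the \<open>m\<close>-th tensor power\<close>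
  have expand: "dotp d u v ^ m = (\<Sum>f\<in>F. P u f * P v f)" for u v
  proof -
    have "dotp d u v ^ m = (\<Prod>l<m. \<Sum>i<d. u i * v i)"
      by (simp add: dotp_def)
    also have "\<dots> = (\<Sum>f\<in>F. \<Prod>l<m. u (f l) * v (f l))"
      unfolding F_def by (rule prod_sum_PiE) auto
    finally show ?thesis
      by (simp add: P_def prod.distrib)
  qed
  fix I :: "nat set" and a :: "nat \<Rightarrow> real" and p :: "nat \<Rightarrow> nat \<Rightarrow> real"
  define V where "V f = (\<Sum>i\<in>I. a i * P (p i) f)" for f
  have gram: "gram_form (\<lambda>u v. dotp d u v ^ m) I a p = (\<Sum>f\<in>F. (V f)\<^sup>2)"
    by (simp add: gram_form_def V_def expand power2_eq_square sum_product sum_distrib_left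
        sum.swap[of _ F] mult_ac)
  then show "0 \<le> gram_form (\<lambda>u v. dotp d u v ^ m) I a p"
    by (simp add: sum_nonneg)
  have "(\<Sum>i\<in>I. a i * dotp d w (p i) ^ m) = (\<Sum>f\<in>F. P w f * V f)"
    by (simp add: V_def expand sum_distrib_left sum.swap[of _ F] mult_ac)
  moreover have "dotp d w w ^ m = (\<Sum>f\<in>F. (P w f)\<^sup>2)"
    by (simp add: expand power2_eq_square)
  ultimately show "(\<Sum>i\<in>I. a i * dotp d w (p i) ^ m)\<^sup>2
      \<le> dotp d w w ^ m * gram_form (\<lambda>u v. dotp d u v ^ m) I a p"
    by (simp add: gram Cauchy_Schwarz_ineq_sum)
qed (simp add: dotp_self_nonneg)

lemma in_rkhs_zero: "in_rkhs S (\<lambda>_ _. 0) (\<lambda>_. 0) 0"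
  by (rule in_rkhsI) (simp_all add: gram_form_def)

lemma add_square_le_mult_add:
  fixes A\<^sub>1 A\<^sub>2 W\<^sub>1 W\<^sub>2 Q\<^sub>1 Q\<^sub>2 :: real
  assumes "A\<^sub>1\<^sup>2 \<le> W\<^sub>1 * Q\<^sub>1" "A\<^sub>2\<^sup>2 \<le> W\<^sub>2 * Q\<^sub>2"
    and "0 \<le> W\<^sub>1" "0 \<le> W\<^sub>2" "0 \<le> Q\<^sub>1" "0 \<le> Q\<^sub>2"
  shows "(A\<^sub>1 + A\<^sub>2)\<^sup>2 \<le> (W\<^sub>1 + W\<^sub>2) * (Q\<^sub>1 + Q\<^sub>2)"
proof -
  define u v where "u = W\<^sub>1 * Q\<^sub>2" and "v = W\<^sub>2 * Q\<^sub>1"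
  have "(2 * (A\<^sub>1 * A\<^sub>2))\<^sup>2 \<le> 4 * (u * v)"
    using mult_mono[OF assms(1,2)] assms(3-6) by (simp add: u_def v_def power_mult_distrib mult_ac)
  also have "\<dots> \<le> (u + v)\<^sup>2"
    using zero_le_power2[of "u - v"] unfolding power2_sum power2_diff by linarith
  finally have "(2 * (A\<^sub>1 * A\<^sub>2))\<^sup>2 \<le> (u + v)\<^sup>2" .
  moreover have "0 \<le> u + v"
    using assms(3-6) by (simp add: u_def v_def)
  ultimately have "2 * (A\<^sub>1 * A\<^sub>2) \<le> u + v"
    by (rule power2_le_imp_le)
  then have "(A\<^sub>1 + A\<^sub>2)\<^sup>2 \<le> W\<^sub>1 * Q\<^sub>1 + W\<^sub>2 * Q\<^sub>2 + u + v"
    using assms(1,2) unfolding power2_sum by linarith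
  also have "\<dots> = (W\<^sub>1 + W\<^sub>2) * (Q\<^sub>1 + Q\<^sub>2)"
    by (simp add: u_def v_def algebra_simps)
  finally show ?thesis .
qed

lemma in_rkhs_add:
  assumes "in_rkhs S K\<^sub>1 f\<^sub>1 W\<^sub>1" "in_rkhs S K\<^sub>2 f\<^sub>2 W\<^sub>2"
  shows "in_rkhs S (\<lambda>x y. K\<^sub>1 x y + K\<^sub>2 x y) (\<lambda>x. f\<^sub>1 x + f\<^sub>2 x) (W\<^sub>1 + W\<^sub>2)"
proof (rule in_rkhsI)
  fix I :: "nat set" and a p
  assume I: "finite I" "p ` I \<subseteq> S"
  note h\<^sub>1 = in_rkhsD[OF assms(1) I, of a] and h\<^sub>2 = in_rkhsD[OF assms(2) I, of a]
  have gram: "gram_form (\<lambda>x y. K\<^sub>1 x y + K\<^sub>2 x y) I a p = gram_form K\<^sub>1 I a p + gram_form K\<^sub>2 I a p"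
    by (simp add: gram_form_def distrib_left sum.distrib)
  then show "0 \<le> gram_form (\<lambda>x y. K\<^sub>1 x y + K\<^sub>2 x y) I a p"
    using h\<^sub>1 h\<^sub>2 by simp
  have "(\<Sum>i\<in>I. a i * f\<^sub>1 (p i) + a i * f\<^sub>2 (p i))\<^sup>2
      \<le> (W\<^sub>1 + W\<^sub>2) * (gram_form K\<^sub>1 I a p + gram_form K\<^sub>2 I a p)"
    unfolding sum.distrib
    by (rule add_square_le_mult_add[OF h\<^sub>1(2) h\<^sub>2(2)])
       (use h\<^sub>1 h\<^sub>2 in_rkhs_weight_nonneg assms in auto)
  then show "(\<Sum>i\<in>I. a i * (f\<^sub>1 (p i) + f\<^sub>2 (p i)))\<^sup>2
      \<le> (W\<^sub>1 + W\<^sub>2) * gram_form (\<lambda>x y. K\<^sub>1 x y + K\<^sub>2 x y) I a p"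
    by (simp add: gram distrib_left)
qed (use assms in \<open>simp add: in_rkhs_def\<close>)

lemma in_rkhs_sum:
  assumes "finite J" "\<And>n. n \<in> J \<Longrightarrow> in_rkhs S (K n) (f n) (W n)"
  shows "in_rkhs S (\<lambda>x y. \<Sum>n\<in>J. K n x y) (\<lambda>x. \<Sum>n\<in>J. f n x) (\<Sum>n\<in>J. W n)"
  using assms by (induction J rule: finite_induct) (simp_all add: in_rkhs_zero in_rkhs_add)

lemma in_rkhs_scale:
  assumes "in_rkhs S K f W" "0 \<le> c" "0 \<le> W'" "c'\<^sup>2 * W \<le> c * W'"
  shows "in_rkhs S (\<lambda>x y. c * K x y) (\<lambda>x. c' * f x) W'"
proof (rule in_rkhsI)
  fix I :: "nat set" and a p
  assume I: "finite I" "p ` I \<subseteq> S"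
  note h = in_rkhsD[OF assms(1) I, of a]
  have gram: "gram_form (\<lambda>x y. c * K x y) I a p = c * gram_form K I a p"
    by (simp add: gram_form_def sum_distrib_left mult_ac)
  then show "0 \<le> gram_form (\<lambda>x y. c * K x y) I a p"
    using h assms(2) by simp
  have "(\<Sum>i\<in>I. a i * (c' * f (p i)))\<^sup>2 = c'\<^sup>2 * (\<Sum>i\<in>I. a i * f (p i))\<^sup>2"
    by (simp add: sum_distrib_left power_mult_distrib[symmetric] mult_ac)
  also have "\<dots> \<le> c'\<^sup>2 * W * gram_form K I a p"
    using h by (simp add: mult_left_mono mult.assoc)
  also have "\<dots> \<le> c * W' * gram_form K I a p"
    using h assms(4) by (simp add: mult_right_mono)
  finally show "(\<Sum>i\<in>I. a i * (c' * f (p i)))\<^sup>2 \<le> W' * gram_form (\<lambda>x y. c * K x y) I a p"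
    by (simp add: gram mult_ac)
qed (rule assms(3))

lemma in_rkhs_mono:
  assumes "in_rkhs S K f W" "W \<le> W'"
  shows "in_rkhs S K f W'"
  using in_rkhs_scale[OF assms(1), of 1 W' 1] assms in_rkhs_weight_nonneg[OF assms(1)] by simp

lemma in_rkhs_comp:
  assumes "in_rkhs S K f W" "g ` T \<subseteq> S"
  shows "in_rkhs T (\<lambda>x y. K (g x) (g y)) (\<lambda>x. f (g x)) W"
proof (rule in_rkhsI)
  fix I :: "nat set" and a p
  assume I: "finite I" "p ` I \<subseteq> T"
  then have "(g \<circ> p) ` I \<subseteq> S"
    using assms(2) by auto
  from in_rkhsD[OF assms(1) I(1) this, of a]
  show "0 \<le> gram_form (\<lambda>x y. K (g x) (g y)) I a p"
    and "(\<Sum>i\<in>I. a i * f (g (p i)))\<^sup>2 \<le> W * gram_form (\<lambda>x y. K (g x) (g y)) I a p"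
    by (simp_all add: gram_form_def)
qed (rule in_rkhs_weight_nonneg[OF assms(1)])

lemma in_rkhs_limit:
  assumes F: "F \<noteq> bot"
    and bound: "eventually (\<lambda>k. in_rkhs S (K' k) (f' k) W) F"
    and K: "\<And>x y. x \<in> S \<Longrightarrow> y \<in> S \<Longrightarrow> ((\<lambda>k. K' k x y) \<longlongrightarrow> K x y) F"
    and f: "\<And>x. x \<in> S \<Longrightarrow> ((\<lambda>k. f' k x) \<longlongrightarrow> f x) F"
  shows "in_rkhs S K f W"
proof (rule in_rkhsI)
  show "0 \<le> W"
    using eventually_happens'[OF F bound] in_rkhs_weight_nonneg by blast
  fix I :: "nat set" and a p
  assume I: "finite I" "p ` I \<subseteq> S"
  have gram: "((\<lambda>k. gram_form (K' k) I a p) \<longlongrightarrow> gram_form K I a p) F"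
    unfolding gram_form_def using I by (intro tendsto_intros K) auto
  have lin: "((\<lambda>k. \<Sum>i\<in>I. a i * f' k (p i)) \<longlongrightarrow> (\<Sum>i\<in>I. a i * f (p i))) F"
    using I by (intro tendsto_intros f) auto
  have ev: "eventually (\<lambda>k. 0 \<le> gram_form (K' k) I a p
      \<and> (\<Sum>i\<in>I. a i * f' k (p i))\<^sup>2 \<le> W * gram_form (K' k) I a p) F"
    using bound by eventually_elim (use in_rkhsD[OF _ I] in simp)
  show "0 \<le> gram_form K I a p"
    by (rule tendsto_le[OF F gram tendsto_const]) (use ev in \<open>auto elim: eventually_mono\<close>)
  show "(\<Sum>i\<in>I. a i * f (p i))\<^sup>2 \<le> W * gram_form K I a p"
    by (rule tendsto_le[OF F tendsto_mult_left[OF gram] tendsto_power[OF lin]])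
       (use ev in \<open>auto elim: eventually_mono\<close>)
qed

section \<open>Arcsine kernels\<close>

lemma in_rkhs_dotp_power_series:
  assumes "0 < \<kappa>" "dotp d w w \<le> \<kappa>" "\<And>n. 0 \<le> p n" "\<And>n. \<bar>q n\<bar> \<le> p n"
  shows "in_rkhs UNIV (\<lambda>u v. \<Sum>n<N. p n * (\<kappa> * dotp d u v) ^ Suc n)
      (\<lambda>u. \<Sum>n<N. q n * dotp d w u ^ Suc n) (\<Sum>n<N. p n)"
proof (rule in_rkhs_sum)
  fix n
  let ?m = "Suc n"
  have "(q n)\<^sup>2 * dotp d w w ^ ?m \<le> (p n)\<^sup>2 * \<kappa> ^ ?m"
    using assms dotp_self_nonneg
    by (intro mult_mono power_mono abs_le_square_iff[THEN iffD1]) auto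
  then have "in_rkhs UNIV (\<lambda>u v. (p n * \<kappa> ^ ?m) * dotp d u v ^ ?m)
      (\<lambda>u. q n * dotp d w u ^ ?m) (p n)"
    using assms by (intro in_rkhs_scale[OF in_rkhs_dotp_power]) (simp_all add: power2_eq_square mult_ac)
  then show "in_rkhs UNIV (\<lambda>u v. p n * (\<kappa> * dotp d u v) ^ ?m) (\<lambda>u. q n * dotp d w u ^ ?m) (p n)"
    by (simp add: power_mult_distrib mult_ac)
qed simp

lemma in_rkhs_arcsin_dotp_scaled:
  assumes \<kappa>: "0 < \<kappa>" "dotp d w w \<le> \<kappa>" and r: "0 \<le> r" "r < 1"
    and q: "\<And>n. \<bar>q n\<bar> \<le> arc_coeff (-1) n"
    and \<phi>: "\<And>t. \<bar>t\<bar> < 1 \<Longrightarrow> (\<lambda>n. q n * t ^ Suc n) sums \<phi> t"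
  shows "in_rkhs {u. dotp d u u \<le> 1 / \<kappa>} (\<lambda>u v. arcsin (r * (\<kappa> * dotp d u v)))
      (\<lambda>u. \<phi> (r * dotp d w u)) (pi / 2)"
proof (rule in_rkhs_limit[where F = sequentially])
  let ?B = "{u. dotp d u u \<le> 1 / \<kappa>}"
  have small: "\<bar>r * t\<bar> < 1" if "\<bar>t\<bar> \<le> 1" for t
    using r that mult_left_le[of "\<bar>t\<bar>" r] by (simp add: abs_mult)
  have kernel_arg: "\<bar>\<kappa> * dotp d u v\<bar> \<le> 1" if "u \<in> ?B" "v \<in> ?B" for u v
    using abs_dotp_le_ball[OF \<kappa>(1)] that by simp
  have feature_arg: "\<bar>dotp d w u\<bar> \<le> 1" if "u \<in> ?B" for u
    using abs_dotp_le_sqrt[OF \<kappa>(2), of u "1 / \<kappa>"] that \<kappa> by simp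
  have "in_rkhs ?B
      (\<lambda>u v. \<Sum>n<N. arc_coeff (-1) n * r ^ Suc n * (\<kappa> * dotp d u v) ^ Suc n)
      (\<lambda>u. \<Sum>n<N. q n * r ^ Suc n * dotp d w u ^ Suc n) (pi / 2)" for N
  proof (rule in_rkhs_mono[OF _ arc_coeff_partial_sum_le[OF r]])
    show "in_rkhs ?B (\<lambda>u v. \<Sum>n<N. arc_coeff (-1) n * r ^ Suc n * (\<kappa> * dotp d u v) ^ Suc n)
        (\<lambda>u. \<Sum>n<N. q n * r ^ Suc n * dotp d w u ^ Suc n) (\<Sum>n<N. arc_coeff (-1) n * r ^ Suc n)"
      using in_rkhs_comp[OF in_rkhs_dotp_power_series[OF \<kappa>, where p = "\<lambda>n. arc_coeff (-1) n * r ^ Suc n"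
          and q = "\<lambda>n. q n * r ^ Suc n" and N = N], of "\<lambda>u. u" ?B] q r arc_coeff_minus_one_nonneg
      by (simp add: abs_mult mult_right_mono)
  qed
  then show "\<forall>\<^sub>F N in sequentially. in_rkhs ?B
      (\<lambda>u v. \<Sum>n<N. arc_coeff (-1) n * r ^ Suc n * (\<kappa> * dotp d u v) ^ Suc n)
      (\<lambda>u. \<Sum>n<N. q n * r ^ Suc n * dotp d w u ^ Suc n) (pi / 2)"
    by simp
  fix u v
  assume u: "u \<in> ?B"
  show "(\<lambda>N. \<Sum>n<N. q n * r ^ Suc n * dotp d w u ^ Suc n) \<longlonglongrightarrow> \<phi> (r * dotp d w u)"
    using \<phi>[OF small[OF feature_arg[OF u]]] by (simp add: sums_def power_mult_distrib mult_ac)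
  assume v: "v \<in> ?B"
  show "(\<lambda>N. \<Sum>n<N. arc_coeff (-1) n * r ^ Suc n * (\<kappa> * dotp d u v) ^ Suc n)
      \<longlonglongrightarrow> arcsin (r * (\<kappa> * dotp d u v))"
    using arcsin_sums[OF small[OF kernel_arg[OF u v]]]
    by (simp add: sums_def power_mult_distrib mult_ac)
qed simp

lemma tendsto_scaled_at_left_one:
  fixes g :: "real \<Rightarrow> real"
  assumes "continuous_on {-1..1} g" "\<bar>t\<bar> \<le> 1"
  shows "((\<lambda>r. g (r * t)) \<longlongrightarrow> g t) (at_left 1)"
proof -
  have "continuous_on {0..1} (\<lambda>r. g (r * t))"
  proof (rule continuous_on_compose2[OF assms(1)])
    have "\<bar>r * t\<bar> \<le> 1" if "r \<in> {0..1}" for r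
      using assms(2) that by (simp add: abs_mult mult_le_one)
    then show "(\<lambda>r. r * t) ` {0..1} \<subseteq> {-1..1}"
      by (auto simp: abs_le_iff)
  qed (intro continuous_intros)
  from continuous_on_Icc_at_leftD[OF this] show ?thesis
    by simp
qed

lemma in_rkhs_arcsin_dotp:
  assumes \<kappa>: "0 < \<kappa>" "dotp d w w \<le> \<kappa>"
    and q: "\<And>n. \<bar>q n\<bar> \<le> arc_coeff (-1) n"
    and \<phi>: "\<And>t. \<bar>t\<bar> < 1 \<Longrightarrow> (\<lambda>n. q n * t ^ Suc n) sums \<phi> t" "continuous_on {-1..1} \<phi>"
  shows "in_rkhs {u. dotp d u u \<le> 1 / \<kappa>} (\<lambda>u v. arcsin (\<kappa> * dotp d u v))
      (\<lambda>u. \<phi> (dotp d w u)) (pi / 2)"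
proof (rule in_rkhs_limit[where F = "at_left 1"])
  show "\<forall>\<^sub>F r in at_left 1. in_rkhs {u. dotp d u u \<le> 1 / \<kappa>}
      (\<lambda>u v. arcsin (r * (\<kappa> * dotp d u v))) (\<lambda>u. \<phi> (r * dotp d w u)) (pi / 2)"
    using eventually_at_left_real[OF zero_less_one]
    by eventually_elim (use in_rkhs_arcsin_dotp_scaled[OF \<kappa> _ _ q \<phi>(1)] in auto)
  fix u v
  assume u: "u \<in> {u. dotp d u u \<le> 1 / \<kappa>}"
  show "((\<lambda>r. \<phi> (r * dotp d w u)) \<longlongrightarrow> \<phi> (dotp d w u)) (at_left 1)"
    using abs_dotp_le_sqrt[OF \<kappa>(2), of u "1 / \<kappa>"] u \<kappa>
    by (intro tendsto_scaled_at_left_one \<phi>(2)) simp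
  assume v: "v \<in> {u. dotp d u u \<le> 1 / \<kappa>}"
  from abs_dotp_le_ball[OF \<kappa>(1)] u v
  have "\<bar>\<kappa> * dotp d u v\<bar> \<le> 1"
    by simp
  then show "((\<lambda>r. arcsin (r * (\<kappa> * dotp d u v))) \<longlongrightarrow> arcsin (\<kappa> * dotp d u v)) (at_left 1)"
    by (intro tendsto_scaled_at_left_one continuous_on_arcsin')
qed simp

section \<open>The kernel perceptron\<close>

definition perc_norm2 :: "(point \<Rightarrow> point \<Rightarrow> real) \<Rightarrow> (nat \<Rightarrow> point) \<Rightarrow> (nat \<Rightarrow> real) \<Rightarrow> nat list \<Rightarrow> real"
  where "perc_norm2 K X y upd = sum_list (map (\<lambda>j. y j * perc_g K X y upd (X j)) upd)"

lemma perc_g_snoc: "perc_g K X y (upd @ [n]) x = perc_g K X y upd x + y n * K x (X n)"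
  by (simp add: perc_g_def)

lemma perc_norm2_snoc:
  assumes "\<And>x x'. K x x' = K x' x"
  shows "perc_norm2 K X y (upd @ [n])
    = perc_norm2 K X y upd + 2 * (y n * perc_g K X y upd (X n)) + (y n)\<^sup>2 * K (X n) (X n)"
proof -
  have "sum_list (map (\<lambda>j. y j * (y n * K (X j) (X n))) upd) = y n * perc_g K X y upd (X n)"
    by (simp add: perc_g_def assms sum_list_const_mult[symmetric] mult_ac)
  then show ?thesis
    by (simp add: perc_norm2_def perc_g_snoc sum_list_addf power2_eq_square
        algebra_simps)
qed

lemma perc_run_Suc: "perc_run K N X y (Suc t) = perc_step K N X y (perc_run K N X y t)"
  by (simp add: perc_run_def)

lemma perc_run_indices:
  assumes "N \<ge> 1"
  shows "snd (perc_run K N X y t) < N \<and> set (fst (perc_run K N X y t)) \<subseteq> {..<N}"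
proof (induction t)
  case 0
  then show ?case
    using assms by (simp add: perc_run_def)
next
  case (Suc t)
  then show ?case
    using assms by (cases "perc_run K N X y t") (auto simp: perc_run_Suc perc_step_def)
qed

lemma mult_le_0_if_sgn_ne:
  fixes g :: real
  assumes "y \<in> {-1, 1}" "sgn g \<noteq> y"
  shows "y * g \<le> 0"
  using assms by (auto simp: sgn_if split: if_splits)

lemma perc_run_norm2_le:
  assumes sym: "\<And>x x'. K x x' = K x' x" and N: "N \<ge> 1"
    and y: "\<And>n. n < N \<Longrightarrow> y n \<in> {-1, 1}" and B: "\<And>n. n < N \<Longrightarrow> K (X n) (X n) \<le> B"
  shows "perc_norm2 K X y (fst (perc_run K N X y t)) \<le> real (length (fst (perc_run K N X y t))) * B"
proof (induction t)
  case 0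
  then show ?case
    by (simp add: perc_run_def perc_norm2_def)
next
  case (Suc t)
  obtain upd n where run: "perc_run K N X y t = (upd, n)"
    by fastforce
  have n: "n < N"
    using perc_run_indices[OF N, of K X y t] run by simp
  show ?case
  proof (cases "sgn (perc_g K X y upd (X n)) \<noteq> y n")
    case True
    have "(y n)\<^sup>2 = 1"
      using y[OF n] by auto
    moreover have "y n * perc_g K X y upd (X n) \<le> 0"
      using mult_le_0_if_sgn_ne[OF y[OF n] True] .
    ultimately have "perc_norm2 K X y (upd @ [n]) \<le> perc_norm2 K X y upd + B"
      using B[OF n] by (simp add: perc_norm2_snoc[OF sym])
    then show ?thesis
      using Suc.IH True by (simp add: run perc_run_Suc perc_step_def algebra_simps)
  next
    case False
    then show ?thesis
      using Suc.IH by (simp add: run perc_run_Suc perc_step_def)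
  qed
qed

lemma length_mult_le_sum_list:
  fixes c :: real
  assumes "\<And>j. j \<in> set upd \<Longrightarrow> c \<le> h j"
  shows "length upd * c \<le> sum_list (map h upd)"
  using assms by (induction upd) (auto simp: algebra_simps add_mono)

lemma in_rkhs_perc_norm2:
  assumes "in_rkhs S K f W" "\<And>j. j \<in> set upd \<Longrightarrow> X j \<in> S"
  shows "(sum_list (map (\<lambda>j. y j * f (X j)) upd))\<^sup>2 \<le> W * perc_norm2 K X y upd"
proof -
  have "(\<lambda>i. X (upd ! i)) ` {..<length upd} \<subseteq> S"
    using assms(2) by auto
  from in_rkhsD(2)[OF assms(1) finite_lessThan this, of "\<lambda>i. y (upd ! i)"]
  show ?thesis
    by (simp add: gram_form_def perc_norm2_def perc_g_def sum_list_sum_nth atLeast0LessThan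
        sum_distrib_left mult_ac)
qed

lemma perc_run_length_le:
  assumes "in_rkhs S K f W" and sym: "\<And>x x'. K x x' = K x' x" and N: "N \<ge> 1" and "\<epsilon> > 0"
    and X: "\<And>n. n < N \<Longrightarrow> X n \<in> S" and y: "\<And>n. n < N \<Longrightarrow> y n \<in> {-1, 1}"
    and margin: "\<And>n. n < N \<Longrightarrow> \<epsilon> \<le> y n * f (X n)"
    and B: "\<And>n. n < N \<Longrightarrow> K (X n) (X n) \<le> B"
  shows "length (fst (perc_run K N X y t)) \<le> W * B / \<epsilon>\<^sup>2"
proof -
  define upd where "upd = fst (perc_run K N X y t)"
  define L where "L = real (length upd)"
  define G where "G = sum_list (map (\<lambda>j. y j * f (X j)) upd)"
  have upd_N: "j \<in> set upd \<Longrightarrow> j < N" for j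
    using perc_run_indices[OF N] upd_def by blast
  have "L * \<epsilon> \<le> G"
    unfolding L_def G_def by (rule length_mult_le_sum_list) (use margin upd_N in auto)
  then have "(L * \<epsilon>)\<^sup>2 \<le> G\<^sup>2"
    using \<open>\<epsilon> > 0\<close> by (intro power_mono) (auto simp: L_def)
  also have "\<dots> \<le> W * perc_norm2 K X y upd"
    unfolding G_def by (rule in_rkhs_perc_norm2[OF assms(1)]) (use X upd_N in auto)
  also have "\<dots> \<le> W * (L * B)"
    using perc_run_norm2_le[where K = K and N = N and X = X and y = y and B = B, OF sym N y B]
      in_rkhs_weight_nonneg[OF assms(1)]
    by (simp add: mult_left_mono L_def upd_def)
  finally have "L * (L * \<epsilon>\<^sup>2) \<le> L * (W * B)"
    by (simp add: power_mult_distrib power2_eq_square mult_ac)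
  moreover have "0 \<le> W * B"
    using in_rkhs_weight_nonneg[OF assms(1)] in_rkhs_diag_nonneg[OF assms(1) X[of 0]] B[of 0] N
    by simp
  ultimately have "L * \<epsilon>\<^sup>2 \<le> W * B"
    by (cases "L = 0") (auto simp: L_def)
  then show ?thesis
    using \<open>\<epsilon> > 0\<close> by (simp add: L_def upd_def pos_le_divide_eq)
qed

lemma perc_run_prefix:
  assumes "t \<le> t'"
  shows "\<exists>zs. fst (perc_run K N X y t') = fst (perc_run K N X y t) @ zs"
  using assms
proof (induction t' rule: dec_induct)
  case (step m)
  then show ?case
    by (cases "perc_run K N X y m") (auto simp: perc_run_Suc perc_step_def)
qed simp

lemma perc_converges_within_if_bounded:
  fixes T :: real
  assumes bound: "\<And>t. length (fst (perc_run K N X y t)) \<le> T"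
  shows "perc_converges_within K N X y T"
proof -
  let ?L = "\<lambda>t. length (fst (perc_run K N X y t))"
  have "int (?L t) \<le> \<lceil>T\<rceil>" for t
    using ceiling_mono[OF bound[of t]] by simp
  then have "range ?L \<subseteq> {..nat \<lceil>T\<rceil>}"
    by (metis atMost_iff image_subsetI nat_int nat_mono)
  then have fin: "finite (range ?L)"
    by (rule finite_subset) simp
  obtain t\<^sub>0 where "?L t\<^sub>0 = Max (range ?L)"
    using Max_in[OF fin] by auto
  then have t\<^sub>0: "\<forall>t. ?L t \<le> ?L t\<^sub>0"
    using fin by simp
  show ?thesis
    unfolding perc_converges_within_def
  proof (intro exI[of _ t\<^sub>0] conjI allI impI)
    fix t assume "t\<^sub>0 \<le> t"
    with perc_run_prefix obtain zs where "fst (perc_run K N X y t) = fst (perc_run K N X y t\<^sub>0) @ zs"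
      by blast
    with t\<^sub>0[rule_format, of t] show "fst (perc_run K N X y t) = fst (perc_run K N X y t\<^sub>0)"
      by simp
  qed (rule bound)
qed

lemma perceptron_converges:
  assumes "in_rkhs S K f W" and "\<And>x x'. K x x' = K x' x" and "N \<ge> 1" and "\<epsilon> > 0"
    and "\<And>n. n < N \<Longrightarrow> X n \<in> S" and "\<And>n. n < N \<Longrightarrow> y n \<in> {-1, 1}"
    and "\<And>n. n < N \<Longrightarrow> \<epsilon> \<le> y n * f (X n)"
    and "\<And>n. n < N \<Longrightarrow> K (X n) (X n) \<le> B"
  shows "perc_converges_within K N X y (W * B / \<epsilon>\<^sup>2)"
proof (rule perc_converges_within_if_bounded)
  show "length (fst (perc_run K N X y t)) \<le> W * B / \<epsilon>\<^sup>2" for t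
    by (rule perc_run_length_le[where S = S and f = f]) (use assms in auto)
qed

section \<open>The product space form kernel\<close>

definition psf_domain :: "nat \<Rightarrow> nat \<Rightarrow> real \<Rightarrow> real \<Rightarrow> point set" where
  "psf_domain dS dH CS R = {x. dotp (Suc dS) (fst (snd x)) (fst (snd x)) \<le> 1 / CS
     \<and> dotp (Suc dH) (snd (snd x)) (snd (snd x)) \<le> R\<^sup>2}"

lemma psf_kernel_eq:
  "psf_kernel dE dS dH \<alpha>S \<alpha>H CS R x x' =
     1 + dotp dE (fst x) (fst x') + \<alpha>S * arcsin (CS * dotp (Suc dS) (fst (snd x)) (fst (snd x')))
       + \<alpha>H * arcsin (1 / R\<^sup>2 * dotp (Suc dH) (snd (snd x)) (snd (snd x')))"
  by (cases x; cases x') (simp add: psf_kernel_def)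

lemma psf_kernel_commute: "psf_kernel dE dS dH \<alpha>S \<alpha>H CS R x x' = psf_kernel dE dS dH \<alpha>S \<alpha>H CS R x' x"
  by (simp add: psf_kernel_eq dotp_commute)

lemma psf_kernel_diag_le:
  assumes "0 \<le> \<alpha>S" "0 \<le> \<alpha>H" "0 < CS" "0 < R"
    and "x \<in> psf_domain dS dH CS R" "dotp dE (fst x) (fst x) \<le> D\<^sup>2"
  shows "psf_kernel dE dS dH \<alpha>S \<alpha>H CS R x x \<le> 1 + D\<^sup>2 + \<alpha>S * (pi / 2) + \<alpha>H * (pi / 2)"
proof -
  have arcsin_le: "arcsin (\<kappa> * dotp d u u) \<le> pi / 2" if "0 < \<kappa>" "dotp d u u \<le> 1 / \<kappa>" for \<kappa> d u
    using arcsin_bounded[of "\<kappa> * dotp d u u"] abs_dotp_le_ball[OF that(1) that(2) that(2)] by simp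
  have "arcsin (CS * dotp (Suc dS) (fst (snd x)) (fst (snd x))) \<le> pi / 2"
    using assms by (intro arcsin_le) (simp_all add: psf_domain_def)
  moreover have "arcsin (1 / R\<^sup>2 * dotp (Suc dH) (snd (snd x)) (snd (snd x))) \<le> pi / 2"
    using assms by (intro arcsin_le) (simp_all add: psf_domain_def)
  ultimately show ?thesis
    unfolding psf_kernel_eq using assms by (intro add_mono mult_left_mono order_refl)
qed

lemma in_rkhs_psf_kernel:
  assumes "0 \<le> \<alpha>S" "0 \<le> \<alpha>H" "0 < CS" "0 < R"
    and "dotp (Suc dS) wS wS \<le> CS" "dotp (Suc dH) wH wH \<le> 1 / R\<^sup>2"
  shows "in_rkhs (psf_domain dS dH CS R) (psf_kernel dE dS dH \<alpha>S \<alpha>H CS R)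
    (\<lambda>x. dotp dE wE (fst x) + b + \<alpha>S * arcsin (dotp (Suc dS) wS (fst (snd x)))
       + \<alpha>H * arsinh (lorentz dH wH (snd (snd x))))
    (dotp dE wE wE + b\<^sup>2 + \<alpha>S * (pi / 2) + \<alpha>H * (pi / 2))"
proof -
  let ?S = "psf_domain dS dH CS R"
  have euclid: "in_rkhs ?S (\<lambda>x x'. dotp dE (fst x) (fst x')) (\<lambda>x. dotp dE wE (fst x)) (dotp dE wE wE)"
    using in_rkhs_comp[OF in_rkhs_dotp_power[where m = 1], of fst ?S] by simp
  have sphere: "in_rkhs ?S (\<lambda>x x'. \<alpha>S * arcsin (CS * dotp (Suc dS) (fst (snd x)) (fst (snd x'))))
      (\<lambda>x. \<alpha>S * arcsin (dotp (Suc dS) wS (fst (snd x)))) (\<alpha>S * (pi / 2))"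
  proof (rule in_rkhs_scale[OF in_rkhs_comp[OF in_rkhs_arcsin_dotp[where q = "arc_coeff (-1)"]]])
    show "(\<lambda>x. fst (snd x)) ` ?S \<subseteq> {u. dotp (Suc dS) u u \<le> 1 / CS}"
      by (auto simp: psf_domain_def)
  qed (use assms arcsin_sums continuous_on_arcsin' abs_of_nonneg[OF arc_coeff_minus_one_nonneg]
        in \<open>auto simp: power2_eq_square\<close>)
  have hyperbolic: "in_rkhs ?S (\<lambda>x x'. \<alpha>H * arcsin (1 / R\<^sup>2 * dotp (Suc dH) (snd (snd x)) (snd (snd x'))))
      (\<lambda>x. \<alpha>H * arsinh (lorentz dH wH (snd (snd x)))) (\<alpha>H * (pi / 2))"
    unfolding lorentz_eq_dotp
  proof (rule in_rkhs_scale[OF in_rkhs_comp[OF in_rkhs_arcsin_dotp[where q = "arc_coeff 1"]]])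
    show "(\<lambda>x. snd (snd x)) ` ?S \<subseteq> {u. dotp (Suc dH) u u \<le> 1 / (1 / R\<^sup>2)}"
      by (auto simp: psf_domain_def)
    show "dotp (Suc dH) (wH(0 := - wH 0)) (wH(0 := - wH 0)) \<le> 1 / R\<^sup>2"
      using assms(6) by (simp only: dotp_time_reflect)
  qed (use assms arsinh_sums abs_arc_coeff_one continuous_on_arsinh in \<open>auto simp: power2_eq_square\<close>)
  have "in_rkhs ?S (\<lambda>x x'. 1 + dotp dE (fst x) (fst x')
        + \<alpha>S * arcsin (CS * dotp (Suc dS) (fst (snd x)) (fst (snd x')))
        + \<alpha>H * arcsin (1 / R\<^sup>2 * dotp (Suc dH) (snd (snd x)) (snd (snd x'))))
      (\<lambda>x. b + dotp dE wE (fst x) + \<alpha>S * arcsin (dotp (Suc dS) wS (fst (snd x)))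
        + \<alpha>H * arsinh (lorentz dH wH (snd (snd x))))
      (b\<^sup>2 + dotp dE wE wE + \<alpha>S * (pi / 2) + \<alpha>H * (pi / 2))"
    by (intro in_rkhs_add in_rkhs_const euclid sphere hyperbolic)
  then show ?thesis
    by (simp add: psf_kernel_eq[abs_def] algebra_simps)
qed

lemma psf_perceptron_converges:
  assumes "0 \<le> \<alpha>S" "0 \<le> \<alpha>H" "0 < CS" "0 < R" "N \<ge> 1" "\<epsilon> > 0"
    and sphere: "\<And>n. n < N \<Longrightarrow> on_sphere dS CS (fst (snd (X n)))"
    and X_E: "\<And>n. n < N \<Longrightarrow> enorm dE (fst (X n)) \<le> D"
    and X_H: "\<And>n. n < N \<Longrightarrow> enorm (Suc dH) (snd (snd (X n))) \<le> R"
    and y: "\<And>n. n < N \<Longrightarrow> y n \<in> {-1, 1}"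
    and wE: "enorm dE wE \<le> \<alpha>E" and wS: "enorm (Suc dS) wS \<le> sqrt CS" and wH: "enorm (Suc dH) wH \<le> 1 / R"
    and margin: "\<And>n. n < N \<Longrightarrow> \<epsilon> \<le> y n * (dotp dE wE (fst (X n)) + b
        + \<alpha>S * arcsin (dotp (Suc dS) wS (fst (snd (X n))))
        + \<alpha>H * arsinh (lorentz dH wH (snd (snd (X n)))))"
  shows "perc_converges_within (psf_kernel dE dS dH \<alpha>S \<alpha>H CS R) N X y
    ((\<alpha>E\<^sup>2 + b\<^sup>2 + \<alpha>S * (pi / 2) + \<alpha>H * (pi / 2)) * (1 + D\<^sup>2 + \<alpha>S * (pi / 2) + \<alpha>H * (pi / 2))
      / \<epsilon>\<^sup>2)"
proof (rule perceptron_converges[OF _ psf_kernel_commute assms(5,6)])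
  have "dotp dE wE wE + b\<^sup>2 + \<alpha>S * (pi / 2) + \<alpha>H * (pi / 2)
      \<le> \<alpha>E\<^sup>2 + b\<^sup>2 + \<alpha>S * (pi / 2) + \<alpha>H * (pi / 2)"
    using dotp_self_le_if_enorm_le[OF wE] by simp
  moreover have "dotp (Suc dS) wS wS \<le> CS"
    using dotp_self_le_if_enorm_le[OF wS] \<open>0 < CS\<close> by simp
  moreover have "dotp (Suc dH) wH wH \<le> 1 / R\<^sup>2"
    using dotp_self_le_if_enorm_le[OF wH] by (simp add: power_divide)
  ultimately show "in_rkhs (psf_domain dS dH CS R) (psf_kernel dE dS dH \<alpha>S \<alpha>H CS R)
      (\<lambda>x. dotp dE wE (fst x) + b + \<alpha>S * arcsin (dotp (Suc dS) wS (fst (snd x)))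
        + \<alpha>H * arsinh (lorentz dH wH (snd (snd x))))
      (\<alpha>E\<^sup>2 + b\<^sup>2 + \<alpha>S * (pi / 2) + \<alpha>H * (pi / 2))"
    using assms(1-4) by (intro in_rkhs_mono[OF in_rkhs_psf_kernel]) auto
  fix n
  assume n: "n < N"
  show "X n \<in> psf_domain dS dH CS R"
    using sphere[OF n] dotp_self_le_if_enorm_le[OF X_H[OF n]] by (simp add: on_sphere_def psf_domain_def)
  then show "psf_kernel dE dS dH \<alpha>S \<alpha>H CS R (X n) (X n) \<le> 1 + D\<^sup>2 + \<alpha>S * (pi / 2) + \<alpha>H * (pi / 2)"
    by (rule psf_kernel_diag_le[OF assms(1-4) _ dotp_self_le_if_enorm_le[OF X_E[OF n]]])
qed (use y margin in auto)

theorem theorem3: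
  fixes \<alpha>E \<alpha>S \<alpha>H CS CH R D b :: real
  assumes "\<alpha>E > 0" "\<alpha>S > 0" "\<alpha>H > 0" "CS > 0" "CH < 0" "R > 0"
  shows "\<exists>M::real. \<forall>(dE::nat) (dS::nat) (dH::nat) (N::nat) (X::nat \<Rightarrow> point) (y::nat \<Rightarrow> real)
            (wE::nat \<Rightarrow> real) (wS::nat \<Rightarrow> real) (wH::nat \<Rightarrow> real) (\<epsilon>::real).
     N \<ge> 1 \<longrightarrow> \<epsilon> > 0 \<longrightarrow>
     (\<forall>n<N. on_sphere dS CS (fst (snd (X n))) \<and> on_hyperboloid dH CH (snd (snd (X n)))) \<longrightarrow>
     (\<forall>n<N. enorm dE (fst (X n)) \<le> D) \<longrightarrow>
     (\<forall>n<N. enorm (dH+1) (snd (snd (X n))) \<le> R) \<longrightarrow>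
     (\<forall>n<N. y n \<in> {-1, 1}) \<longrightarrow>
     enorm dE wE = \<alpha>E \<longrightarrow> enorm (dS+1) wS = sqrt CS \<longrightarrow>
     sqrt (lorentz dH wH wH) = sqrt (- CH) \<longrightarrow>
     (\<forall>n<N. y n * (dotp dE wE (fst (X n)) + b
                 + \<alpha>S * arcsin (dotp (dS+1) wS (fst (snd (X n))))
                 + \<alpha>H * arsinh (lorentz dH wH (snd (snd (X n))))) \<ge> \<epsilon>) \<longrightarrow>
     enorm (dH+1) wH \<le> 1 / R \<longrightarrow>
     perc_converges_within (psf_kernel dE dS dH \<alpha>S \<alpha>H CS R) N X y (M / \<epsilon>\<^sup>2)"
proof -
  let ?W = "\<alpha>E\<^sup>2 + b\<^sup>2 + \<alpha>S * (pi / 2) + \<alpha>H * (pi / 2)"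
  let ?B = "1 + D\<^sup>2 + \<alpha>S * (pi / 2) + \<alpha>H * (pi / 2)"
  show ?thesis
    using assms by (intro exI[of _ "?W * ?B"] allI impI psf_perceptron_converges) auto
qed

end
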